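(* For every integer $n>16$, the generalized Petersen graph $GP(n,3)$ is not $2$-distance-balanced.
   Context: For a connected graph $G$ and $x,y\in V(G)$, $d_G(x,y)$ denotes the distance. Let $W_{xy}=\{w\in V(G): d_G(w,x)<d_G(w,y)\}$. $G$ is called $\ell$-distance-balanced if $|W_{xy}|=|W_{yx}|$ for every pair $x,y\in V(G)$ with $d_G(x,y)=\ell$. For integers $n\ge 3$ and $1\le k<n/2$, the generalized Petersen graph $GP(n,k)$ has vertex set $\{u_i: i\in\mathbb{Z}_n\}\cup\{v_i: i\in\mathbb{Z}_n\}$ and edge set $\{u_iu_{i+1}: i\in\mathbb{Z}_n\}\cup\{v_iv_{i+k}: i\in\mathbb{Z}_n\}\cup\{u_iv_i: i\in\mathbb{Z}_n\}$. *)

theory Defs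
  imports Main
begin

fun walk :: "'a set \<Rightarrow> ('a \<Rightarrow> 'a \<Rightarrow> bool) \<Rightarrow> 'a \<Rightarrow> 'a \<Rightarrow> nat \<Rightarrow> bool" where
  "walk V E x y 0 \<longleftrightarrow> x \<in> V \<and> x = y"
| "walk V E x y (Suc m) \<longleftrightarrow> x \<in> V \<and> (\<exists>z\<in>V. E x z \<and> walk V E z y m)"

definition gdist :: "'a set \<Rightarrow> ('a \<Rightarrow> 'a \<Rightarrow> bool) \<Rightarrow> 'a \<Rightarrow> 'a \<Rightarrow> nat" where
  "gdist V E x y = (LEAST m. walk V E x y m)"

definition Wset :: "'a set \<Rightarrow> ('a \<Rightarrow> 'a \<Rightarrow> bool) \<Rightarrow> 'a \<Rightarrow> 'a \<Rightarrow> 'a set" where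
  "Wset V E x y = {w \<in> V. gdist V E w x < gdist V E w y}"

definition distance_balanced :: "nat \<Rightarrow> 'a set \<Rightarrow> ('a \<Rightarrow> 'a \<Rightarrow> bool) \<Rightarrow> bool" where
  "distance_balanced l V E \<longleftrightarrow>
     (\<forall>x\<in>V. \<forall>y\<in>V. gdist V E x y = l \<longrightarrow> card (Wset V E x y) = card (Wset V E y x))"

text \<open>Generalized Petersen graph GP(n,k): vertex (False,i) is u_i, (True,i) is v_i,
indices in {0..<n} taken modulo n.\<close>
definition GP_V :: "nat \<Rightarrow> (bool \<times> nat) set" where
  "GP_V n = UNIV \<times> {0..<n}"

definition GP_E :: "nat \<Rightarrow> nat \<Rightarrow> bool \<times> nat \<Rightarrow> bool \<times> nat \<Rightarrow> bool" where
  "GP_E n k a b \<longleftrightarrow>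
     (case (a, b) of
        ((False, i), (False, j)) \<Rightarrow> j = (i + 1) mod n \<or> i = (j + 1) mod n
      | ((True, i), (True, j)) \<Rightarrow> j = (i + k) mod n \<or> i = (j + k) mod n
      | ((_, i), (_, j)) \<Rightarrow> i = j)"

end

theory Submission
  imports Defs "HOL-Number_Theory.Cong"
begin

text \<open>
  Take x = v_0 and y = u_(n-1), which are at distance 2. For n \<ge> 17 the distances from v_0 and
  from u_0 to u_j and v_j are min (F j) (F (n - j)), where F is the corresponding distance in the
  infinite graph GP(\<int>,3): the wrap-around of the n-cycle creates no shortcuts. Rotating y to u_0,
  |W_xy| - |W_yx| becomes a sum over the index i of explicit local terms depending on i and n - i.
  All these distances grow by exactly 1 when the index grows by 3, so the local terms are invariant
  under shifting both i and n - i by 3. Hence passing from n to n + 6 only changes boundary terms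
  near i = 0 and i = n, which for n \<ge> 18 no longer depend on n and add up to 2. The imbalance is
  positive for 17 \<le> n \<le> 23 by direct computation, hence for all n \<ge> 17.
\<close>

section \<open>Graph distances\<close>

lemma walk_length_ge_potential:
  assumes lipschitz: "\<And>u v. u \<in> V \<Longrightarrow> v \<in> V \<Longrightarrow> E u v \<Longrightarrow> D u \<le> D v + 1"
    and "D x = 0"
  shows "walk V E a x m \<Longrightarrow> D a \<le> m"
proof (induction m arbitrary: a)
  case 0
  then show ?case using \<open>D x = 0\<close> by simp
next
  case (Suc m)
  then obtain z where "a \<in> V" "z \<in> V" "E a z" "walk V E z x m" by auto
  with Suc.IH lipschitz show ?case by fastforce
qed

lemma walk_along_descent:
  assumes "x \<in> V" and "D x = 0"
    and descent: "\<And>a. a \<in> V \<Longrightarrow> a \<noteq> x \<Longrightarrow> \<exists>b\<in>V. E a b \<and> D b + 1 = D a"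
  shows "a \<in> V \<Longrightarrow> walk V E a x (D a)"
proof (induction "D a" arbitrary: a)
  case 0
  then have "a = x" using descent by force
  then show ?case using \<open>x \<in> V\<close> \<open>D x = 0\<close> by simp
next
  case (Suc k)
  then have "a \<noteq> x" using \<open>D x = 0\<close> by auto
  then obtain b where b: "b \<in> V" "E a b" and Db: "D b + 1 = D a"
    using descent Suc.prems by blast
  have "walk V E b x (D b)"
    using Suc.hyps b Db by simp
  then have "walk V E a x (Suc (D b))"
    using Suc.prems b by auto
  with Db show ?case by simp
qed

lemma gdist_eq_potential:
  assumes "x \<in> V" and "D x = 0"
    and "\<And>u v. u \<in> V \<Longrightarrow> v \<in> V \<Longrightarrow> E u v \<Longrightarrow> D u \<le> D v + 1"
    and "\<And>a. a \<in> V \<Longrightarrow> a \<noteq> x \<Longrightarrow> \<exists>b\<in>V. E a b \<and> D b + 1 = D a"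
    and "a \<in> V"
  shows "gdist V E a x = D a"
  unfolding gdist_def
  using walk_along_descent[of x V D E a] walk_length_ge_potential[of V E D x a] assms
  by (intro Least_equality) auto

lemma walk_automorphism:
  assumes bij: "bij_betw f V V"
    and hom: "\<And>a b. a \<in> V \<Longrightarrow> b \<in> V \<Longrightarrow> E (f a) (f b) \<longleftrightarrow> E a b"
    and "y \<in> V"
  shows "a \<in> V \<Longrightarrow> walk V E (f a) (f y) m \<longleftrightarrow> walk V E a y m"
proof (induction m arbitrary: a)
  case 0
  then show ?case
    using bij \<open>y \<in> V\<close> by (auto simp: bij_betw_def inj_on_eq_iff)
next
  case (Suc m)
  have V: "f ` V = V"
    using bij by (simp add: bij_betw_def)
  have "(\<exists>z\<in>f ` V. E (f a) z \<and> walk V E z (f y) m) \<longleftrightarrow> (\<exists>z\<in>V. E a z \<and> walk V E z y m)"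
    using Suc hom by auto
  then show ?case
    using Suc.prems V by auto
qed

lemma gdist_automorphism:
  assumes "bij_betw f V V"
    and "\<And>a b. a \<in> V \<Longrightarrow> b \<in> V \<Longrightarrow> E (f a) (f b) \<longleftrightarrow> E a b"
    and "a \<in> V" and "y \<in> V"
  shows "gdist V E (f a) (f y) = gdist V E a y"
proof -
  have "walk V E (f a) (f y) = walk V E a y"
    by (rule ext) (rule walk_automorphism[of f V E y a, OF assms(1,2,4,3)])
  then show ?thesis by (simp add: gdist_def)
qed

section \<open>The generalized Petersen graph GP(n,3)\<close>

definition GP_stride :: "nat \<Rightarrow> bool \<Rightarrow> nat" where
  "GP_stride k b = (if b then k else 1)"

lemma GP_E_Pair:
  "GP_E n k (s, i) (t, j) \<longleftrightarrow>
     (s = t \<and> (j = (i + GP_stride k s) mod n \<or> i = (j + GP_stride k s) mod n)) \<or> (s \<noteq> t \<and> i = j)"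
  by (cases s; cases t) (auto simp: GP_E_def GP_stride_def)

definition GP_rot :: "nat \<Rightarrow> bool \<times> nat \<Rightarrow> bool \<times> nat" where
  "GP_rot n w = (fst w, (snd w + 1) mod n)"

lemma Suc_mod_eq_shift_iff:
  fixes i j n :: nat
  assumes "i < n" and "j < n"
  shows "(j + 1) mod n = ((i + 1) mod n + d) mod n \<longleftrightarrow> j = (i + d) mod n"
proof -
  have "(j + 1) mod n = ((i + 1) mod n + d) mod n \<longleftrightarrow> [j + 1 = i + d + 1] (mod n)"
    unfolding cong_def mod_add_left_eq by (simp add: ac_simps)
  also have "\<dots> \<longleftrightarrow> [j = i + d] (mod n)"
    by (rule cong_add_rcancel_nat)
  also have "\<dots> \<longleftrightarrow> j = (i + d) mod n"
    using assms by (simp add: cong_def)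
  finally show ?thesis .
qed

lemma Suc_mod_eq_iff: "(i::nat) < n \<Longrightarrow> j < n \<Longrightarrow> (i + 1) mod n = (j + 1) mod n \<longleftrightarrow> i = j"
  using Suc_mod_eq_shift_iff[of j n i 0] by simp

lemma bij_betw_GP_rot: "bij_betw (GP_rot n) (GP_V n) (GP_V n)"
proof -
  have "inj_on (GP_rot n) (GP_V n)"
  proof (rule inj_onI)
    fix a b assume "a \<in> GP_V n" "b \<in> GP_V n" "GP_rot n a = GP_rot n b"
    then show "a = b"
      using Suc_mod_eq_iff[of "snd a" n "snd b"] by (auto simp: GP_V_def GP_rot_def prod_eq_iff)
  qed
  moreover have "GP_rot n ` GP_V n \<subseteq> GP_V n"
    by (auto simp: GP_V_def GP_rot_def)
  moreover have "finite (GP_V n)"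
    by (simp add: GP_V_def)
  ultimately show ?thesis
    by (simp add: bij_betw_def endo_inj_surj)
qed

lemma GP_E_GP_rot_iff:
  assumes "a \<in> GP_V n" and "b \<in> GP_V n"
  shows "GP_E n k (GP_rot n a) (GP_rot n b) \<longleftrightarrow> GP_E n k a b"
proof -
  obtain s i t j where "a = (s, i)" "b = (t, j)" and ij: "i < n" "j < n"
    using assms by (auto simp: GP_V_def)
  then show ?thesis
    unfolding \<open>a = (s, i)\<close> \<open>b = (t, j)\<close> GP_rot_def fst_conv snd_conv GP_E_Pair
    by (simp only: Suc_mod_eq_shift_iff[OF ij] Suc_mod_eq_shift_iff[OF ij(2,1)] Suc_mod_eq_iff[OF ij])
qed

definition near :: "nat \<Rightarrow> nat \<Rightarrow> bool" where
  "near a b \<longleftrightarrow> a \<le> b + 1 \<and> b \<le> a + 1"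

lemma near_sym: "near a b \<Longrightarrow> near b a"
  by (auto simp: near_def)

lemma near_min: "near a b \<Longrightarrow> near c d \<Longrightarrow> near (min a c) (min b d)"
  by (auto simp: near_def)

text \<open>
  F b j stands for the distance from (root, 0) to (b, j) in the infinite graph on bool \<times> \<nat> with
  rim edges j -- j + 1, inner edges j -- j + 3 and spokes: F is 1-Lipschitz along edges and
  decreases along some edge at every other vertex. The remaining conditions make the wrap-around
  edges of GP(n,3), which join indices \<le> 3 to indices \<ge> n - 3, harmless once n \<ge> 17.
\<close>

locale GP3_profile =
  fixes root :: bool and F :: "bool \<Rightarrow> nat \<Rightarrow> nat"
  assumes near_stride: "near (F b (j + GP_stride 3 b)) (F b j)"
    and near_spoke: "near (F False j) (F True j)"
    and near_inner_1_2: "near (F True 1) (F True 2)"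
    and le_4_if_le_3: "j \<le> 3 \<Longrightarrow> F b j \<le> 4"
    and ge_4_if_ge_12: "12 \<le> j \<Longrightarrow> 4 \<le> F b j"
    and root_zero: "F root 0 = 0"
    and descent: "(b, j) \<noteq> (root, 0) \<Longrightarrow>
      (GP_stride 3 b \<le> j \<and> F b (j - GP_stride 3 b) + 1 = F b j) \<or> F (\<not> b) j + 1 = F b j"
begin

definition wrapped :: "nat \<Rightarrow> bool \<times> nat \<Rightarrow> nat" where
  "wrapped n w = min (F (fst w) (snd w)) (F (fst w) (n - snd w))"

lemma wrapped_le: "wrapped n (b, k) \<le> F b k" "wrapped n (b, k) \<le> F b (n - k)"
  by (simp_all add: wrapped_def)

lemma wrapped_Suc_mod:
  assumes "i < n"
  shows "wrapped n (b, (i + 1) mod n) = min (F b (i + 1)) (F b (n - (i + 1)))"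
proof (cases "i + 1 < n")
  case False
  with assms have "i + 1 = n" by simp
  then show ?thesis by (simp add: wrapped_def min.commute)
qed (simp add: wrapped_def)

lemma near_across_zero:
  assumes "1 \<le> i" and "i \<le> GP_stride 3 b"
  shows "near (F b i) (F b (GP_stride 3 b - i))"
proof (cases b)
  case False
  with assms near_stride[of False 0] show ?thesis by (simp add: GP_stride_def)
next
  case True
  with assms have "i = 1 \<or> i = 2 \<or> i = 3" by (auto simp: GP_stride_def)
  with True near_stride[of True 0] near_inner_1_2 show ?thesis
    by (auto simp: GP_stride_def near_def)
qed

lemma wrapped_near_stride:
  assumes "17 \<le> n" and "k < n"
  shows "near (wrapped n (b, k)) (wrapped n (b, (k + GP_stride 3 b) mod n))"
proof (cases "k + GP_stride 3 b < n")
  case True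
  have "near (F b k) (F b (k + GP_stride 3 b))"
    using near_stride near_sym by blast
  moreover have "near (F b (n - k)) (F b (n - (k + GP_stride 3 b)))"
    using near_stride[of b "n - (k + GP_stride 3 b)"] True by simp
  ultimately show ?thesis
    using True by (simp add: wrapped_def near_min)
next
  case False
  let ?k' = "k + GP_stride 3 b - n"
  have stride: "1 \<le> GP_stride 3 b" "GP_stride 3 b \<le> 3"
    by (simp_all add: GP_stride_def)
  then have "(k + GP_stride 3 b) mod n = ?k'"
    using False assms by (simp add: mod_if)
  moreover have "wrapped n (b, k) = F b (n - k)"
  proof -
    have "n - k \<le> 3" "12 \<le> k" using False stride assms by linarith+
    then have "F b (n - k) \<le> F b k" using le_4_if_le_3 ge_4_if_ge_12 order_trans by blast
    then show ?thesis by (simp add: wrapped_def)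
  qed
  moreover have "wrapped n (b, ?k') = F b ?k'"
  proof -
    have "?k' \<le> 3" "12 \<le> n - ?k'" using stride assms by linarith+
    then have "F b ?k' \<le> F b (n - ?k')" using le_4_if_le_3 ge_4_if_ge_12 order_trans by blast
    then show ?thesis by (simp add: wrapped_def)
  qed
  moreover have "GP_stride 3 b - (n - k) = ?k'"
    using False assms by simp
  ultimately show ?thesis
    using near_across_zero[of "n - k" b] False assms by simp
qed

lemma wrapped_near_spoke: "near (wrapped n (False, k)) (wrapped n (True, k))"
  by (simp add: wrapped_def near_min near_spoke)

lemma wrapped_lipschitz:
  assumes "17 \<le> n" and "a \<in> GP_V n" and "a' \<in> GP_V n" and "GP_E n 3 a a'"
  shows "wrapped n a \<le> wrapped n a' + 1"
proof -
  obtain b k b' k' where a: "a = (b, k)" "k < n" and a': "a' = (b', k')" "k' < n"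
    using assms(2,3) by (auto simp: GP_V_def)
  have "near (wrapped n (b, k)) (wrapped n (b', k'))"
    using assms(4) unfolding a a' GP_E_Pair
  proof (elim disjE conjE)
    assume "b = b'" "k' = (k + GP_stride 3 b) mod n"
    then show ?thesis using wrapped_near_stride[OF assms(1) a(2)] by simp
  next
    assume "b = b'" "k = (k' + GP_stride 3 b) mod n"
    then show ?thesis using wrapped_near_stride[OF assms(1) a'(2)] near_sym by simp
  next
    assume "b \<noteq> b'" "k = k'"
    then show ?thesis using wrapped_near_spoke near_sym by (cases b) auto
  qed
  then show ?thesis using a a' by (simp add: near_def)
qed

lemma wrapped_step_toward:
  assumes "k < n" and "s = k \<or> s = n - k" and "d \<le> s"
  obtains k' where "k' < n" "k = (k' + d) mod n \<or> k' = (k + d) mod n" "wrapped n (b, k') \<le> F b (s - d)"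
proof (cases "s = k")
  case True
  then show ?thesis
    using that[of "k - d"] wrapped_le(1)[of n b "k - d"] assms by simp
next
  case False
  then have "s = n - k" using assms by simp
  have "wrapped n (b, (k + d) mod n) \<le> F b (n - k - d)"
  proof (cases "k + d < n")
    case True
    then show ?thesis using wrapped_le(2)[of n b "k + d"] by simp
  next
    case False
    then have "k + d = n" using \<open>s = n - k\<close> assms by simp
    then show ?thesis using wrapped_le(1)[of n b 0] by simp
  qed
  then show ?thesis
    using that[of "(k + d) mod n"] assms \<open>s = n - k\<close> by simp
qed

lemma wrapped_descent:
  assumes "17 \<le> n" and "a \<in> GP_V n" and "a \<noteq> (root, 0)"
  shows "\<exists>a'\<in>GP_V n. GP_E n 3 a a' \<and> wrapped n a' + 1 = wrapped n a"
proof -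
  obtain b k where a: "a = (b, k)" and "k < n"
    using assms(2) by (auto simp: GP_V_def)
  obtain s where s: "s = k \<or> s = n - k" "wrapped n a = F b s" "(b, s) \<noteq> (root, 0)"
  proof (cases "F b k \<le> F b (n - k)")
    case True
    then show ?thesis using that[of k] a assms(3) by (simp add: wrapped_def)
  next
    case False
    then show ?thesis using that[of "n - k"] a \<open>k < n\<close> by (simp add: wrapped_def)
  qed
  have "\<exists>a'\<in>GP_V n. GP_E n 3 a a' \<and> wrapped n a' + 1 \<le> wrapped n a"
    using descent[OF s(3)]
  proof
    assume step: "GP_stride 3 b \<le> s \<and> F b (s - GP_stride 3 b) + 1 = F b s"
    then obtain k' where "k' < n" "k = (k' + GP_stride 3 b) mod n \<or> k' = (k + GP_stride 3 b) mod n"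
      and "wrapped n (b, k') \<le> F b (s - GP_stride 3 b)"
      using wrapped_step_toward[OF \<open>k < n\<close> s(1)] by blast
    then show ?thesis
      using step s(2) a by (intro bexI[of _ "(b, k')"]) (auto simp: GP_E_Pair GP_V_def)
  next
    assume "F (\<not> b) s + 1 = F b s"
    moreover have "wrapped n (\<not> b, k) \<le> F (\<not> b) s"
      using s(1) wrapped_le by auto
    ultimately show ?thesis
      using s(2) a \<open>k < n\<close> by (intro bexI[of _ "(\<not> b, k)"]) (auto simp: GP_E_Pair GP_V_def)
  qed
  then show ?thesis
    using wrapped_lipschitz[OF assms(1,2)] by force
qed

lemma gdist_to_root:
  assumes "17 \<le> n" and "a \<in> GP_V n"
  shows "gdist (GP_V n) (GP_E n 3) a (root, 0) = wrapped n a"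
proof (rule gdist_eq_potential)
  show "(root, 0) \<in> GP_V n" "wrapped n (root, 0) = 0"
    using assms(1) root_zero by (simp_all add: GP_V_def wrapped_def)
qed (use assms wrapped_lipschitz wrapped_descent in auto)

end

section \<open>Distance profiles from u_0 and v_0\<close>

lemma nat_induct3 [case_names 0 1 2 step]:
  assumes "P 0" and "P 1" and "P 2" and step: "\<And>n::nat. P n \<Longrightarrow> P (n + 3)"
  shows "P n"
proof (induction n rule: less_induct)
  case (less n)
  show ?case
  proof (cases "n < 3")
    case True
    then have "n = 0 \<or> n = 1 \<or> n = 2" by auto
    with assms show ?thesis by auto
  next
    case False
    then obtain k where "n = k + 3"
      using le_add_diff_inverse2 by (metis not_less)
    with less.IH[of k] step show ?thesis by simp
  qed
qed

text \<open>
  Distances in the infinite graph: dist_uv j from u_0 to v_j (and from v_0 to u_j), dist_vv j from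
  v_0 to v_j, dist_uu j from u_0 to u_j. A shortest path uses j div 3 inner edges, j mod 3 rim edges
  and the necessary spokes, unless it stays on the rim.
\<close>

definition dist_uv :: "nat \<Rightarrow> nat" where
  "dist_uv j = j div 3 + j mod 3 + 1"

definition dist_vv :: "nat \<Rightarrow> nat" where
  "dist_vv j = (if j mod 3 = 0 then j div 3 else j div 3 + j mod 3 + 2)"

definition dist_uu :: "nat \<Rightarrow> nat" where
  "dist_uu j = min j (dist_uv j + 1)"

lemma dist_values:
  "dist_uv 0 = 1" "dist_uv 1 = 2" "dist_uv 2 = 3" "dist_vv 0 = 0" "dist_vv 1 = 3" "dist_vv 2 = 4"
  "dist_uu 0 = 0" "dist_uu 1 = 1" "dist_uu 2 = 2"
  by (simp_all add: dist_uu_def dist_uv_def dist_vv_def)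

lemma dist_add3: "dist_uv (j + 3) = dist_uv j + 1" "dist_vv (j + 3) = dist_vv j + 1"
  by (simp_all add: dist_uv_def dist_vv_def div_add_self2)

lemma dist_ge_div3: "j div 3 \<le> dist_uv j" "j div 3 \<le> dist_vv j"
  by (simp_all add: dist_uv_def dist_vv_def)

lemma dist_uv_le: "dist_uv j \<le> j + 1"
  by (induction j rule: nat_induct3) (simp_all add: dist_uv_def dist_add3)

lemma dist_uv_lt: "3 \<le> j \<Longrightarrow> dist_uv j < j"
  using dist_uv_le[of "j - 3"] dist_add3(1)[of "j - 3"] by simp

lemma dist_uu_add3: "3 \<le> j \<Longrightarrow> dist_uu (j + 3) = dist_uu j + 1"
  using dist_uv_lt[of j] by (simp add: dist_uu_def dist_add3)

lemma near_dist_Suc: "near (dist_uv (j + 1)) (dist_uv j)" "near (dist_uu (j + 1)) (dist_uu j)"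
proof -
  show uv: "near (dist_uv (j + 1)) (dist_uv j)"
  proof (induction j rule: nat_induct3)
    case (step n)
    then show ?case using dist_add3(1)[of n] dist_add3(1)[of "n + 1"] by (simp add: near_def)
  qed (simp_all add: near_def dist_uv_def)
  show "near (dist_uu (j + 1)) (dist_uu j)"
    using near_min[of "j + 1" j "dist_uv (j + 1) + 1" "dist_uv j + 1"] uv
    by (simp add: dist_uu_def near_def)
qed

lemma near_dist_spoke: "near (dist_uv j) (dist_vv j)" "near (dist_uu j) (dist_uv j)"
  using dist_uv_le[of j] by (auto simp: near_def dist_uu_def dist_uv_def dist_vv_def)

lemma dist_descent:
  "j \<noteq> 0 \<Longrightarrow> (1 \<le> j \<and> dist_uu (j - 1) + 1 = dist_uu j) \<or> dist_uv j + 1 = dist_uu j"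
  "(3 \<le> j \<and> dist_uv (j - 3) + 1 = dist_uv j) \<or> dist_uu j + 1 = dist_uv j"
  "(1 \<le> j \<and> dist_uv (j - 1) + 1 = dist_uv j) \<or> dist_vv j + 1 = dist_uv j"
  "j \<noteq> 0 \<Longrightarrow> (3 \<le> j \<and> dist_vv (j - 3) + 1 = dist_vv j) \<or> dist_uv j + 1 = dist_vv j"
proof -
  show "j \<noteq> 0 \<Longrightarrow> (1 \<le> j \<and> dist_uu (j - 1) + 1 = dist_uu j) \<or> dist_uv j + 1 = dist_uu j"
    using near_dist_Suc(1)[of "j - 1"] by (auto simp: dist_uu_def near_def)
  show "(3 \<le> j \<and> dist_uv (j - 3) + 1 = dist_uv j) \<or> dist_uu j + 1 = dist_uv j"
  proof (cases "j < 3")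
    case True
    then have "j = 0 \<or> j = 1 \<or> j = 2" by auto
    then show ?thesis using dist_values by auto
  next
    case False
    then show ?thesis using dist_add3(1)[of "j - 3"] by simp
  qed
  show "(1 \<le> j \<and> dist_uv (j - 1) + 1 = dist_uv j) \<or> dist_vv j + 1 = dist_uv j"
  proof (induction j rule: nat_induct3)
    case (step n)
    then show ?case
      using dist_add3[of n] dist_add3(1)[of "n - 1"] by (cases n) (auto simp: add.commute)
  qed (simp_all add: dist_uv_def dist_vv_def)
  show "j \<noteq> 0 \<Longrightarrow> (3 \<le> j \<and> dist_vv (j - 3) + 1 = dist_vv j) \<or> dist_uv j + 1 = dist_vv j"
  proof (cases "j < 3")
    case True
    moreover assume "j \<noteq> 0"
    ultimately have "j = 1 \<or> j = 2" by auto
    then show ?thesis using dist_values by auto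
  next
    case False
    then show ?thesis using dist_add3(2)[of "j - 3"] by simp
  qed
qed

lemma dist_le_4: "j \<le> 3 \<Longrightarrow> dist_uu j \<le> 4 \<and> dist_uv j \<le> 4 \<and> dist_vv j \<le> 4"
proof -
  have "\<forall>j\<in>{..3}. dist_uu j \<le> 4 \<and> dist_uv j \<le> 4 \<and> dist_vv j \<le> 4"
    by code_simp
  then show "j \<le> 3 \<Longrightarrow> ?thesis" by auto
qed

lemma dist_ge_4: "12 \<le> j \<Longrightarrow> 4 \<le> dist_uu j \<and> 4 \<le> dist_uv j \<and> 4 \<le> dist_vv j"
  using dist_ge_div3[of j] div_le_mono[of 12 j 3] by (simp add: dist_uu_def)

lemma dist_far:
  assumes "j \<le> 6" and "15 \<le> j'"
  shows "dist_uu j \<le> dist_uu j'" "dist_uv j \<le> dist_uv j'" "dist_vv j \<le> dist_vv j'"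
proof -
  have "\<forall>j\<in>{..6}. dist_uu j \<le> 5 \<and> dist_uv j \<le> 5 \<and> dist_vv j \<le> 5"
    by code_simp
  then have "dist_uu j \<le> 5" "dist_uv j \<le> 5" "dist_vv j \<le> 5"
    using assms(1) by auto
  moreover have "5 \<le> dist_uv j'" "5 \<le> dist_vv j'"
    using dist_ge_div3[of j'] div_le_mono[of 15 j' 3] assms(2) by simp_all
  moreover from this have "5 \<le> dist_uu j'"
    using assms(2) by (simp add: dist_uu_def)
  ultimately show "dist_uu j \<le> dist_uu j'" "dist_uv j \<le> dist_uv j'" "dist_vv j \<le> dist_vv j'"
    by linarith+
qed

interpretation from_v0: GP3_profile True "\<lambda>b. if b then dist_vv else dist_uv"
  using dist_add3 near_dist_Suc near_dist_spoke dist_le_4 dist_ge_4 dist_descent(3,4) dist_values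
  by unfold_locales (auto simp: GP_stride_def near_def)

interpretation from_u0: GP3_profile False "\<lambda>b. if b then dist_uv else dist_uu"
proof unfold_locales
  fix b :: bool and j :: nat
  assume "(b, j) \<noteq> (False, 0)"
  then show "(GP_stride 3 b \<le> j \<and> (if b then dist_uv else dist_uu) (j - GP_stride 3 b) + 1
      = (if b then dist_uv else dist_uu) j) \<or>
    (if \<not> b then dist_uv else dist_uu) j + 1 = (if b then dist_uv else dist_uu) j"
    using dist_descent(1,2) by (cases b) (auto simp: GP_stride_def)
qed (use dist_add3 near_dist_Suc near_dist_spoke dist_le_4 dist_ge_4 dist_values in
      \<open>auto simp: GP_stride_def near_def\<close>)

section \<open>The imbalance of the pair v_0, u_(n-1)\<close>

lemma gdist_to_u_last:
  assumes "17 \<le> n" and "w \<in> GP_V n"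
  shows "gdist (GP_V n) (GP_E n 3) w (False, n - 1) = from_u0.wrapped n (GP_rot n w)"
proof -
  have y: "(False, n - 1) \<in> GP_V n" and rot_y: "GP_rot n (False, n - 1) = (False, 0)"
    using assms(1) by (simp_all add: GP_V_def GP_rot_def)
  have "gdist (GP_V n) (GP_E n 3) w (False, n - 1)
      = gdist (GP_V n) (GP_E n 3) (GP_rot n w) (GP_rot n (False, n - 1))"
    using gdist_automorphism[of "GP_rot n" "GP_V n" "GP_E n 3",
        OF bij_betw_GP_rot GP_E_GP_rot_iff assms(2) y] by simp
  also have "\<dots> = from_u0.wrapped n (GP_rot n w)"
    unfolding rot_y using from_u0.gdist_to_root[OF assms(1) bij_betw_apply[OF bij_betw_GP_rot assms(2)]] .
  finally show ?thesis .
qed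

lemma gdist_v0_u_last:
  assumes "17 \<le> n"
  shows "gdist (GP_V n) (GP_E n 3) (True, 0) (False, n - 1) = 2"
proof -
  have "4 \<le> dist_uv (n - 1)"
    using dist_ge_4[of "n - 1"] assms by simp
  then show ?thesis
    using gdist_to_u_last[OF assms, of "(True, 0)"] assms
    by (simp add: GP_V_def GP_rot_def from_u0.wrapped_def dist_uv_def)
qed

lemma card_less_diff_eq_sum_sgn:
  fixes f g :: "'a \<Rightarrow> nat"
  assumes "finite A"
  shows "int (card {w \<in> A. f w < g w}) - int (card {w \<in> A. g w < f w})
    = (\<Sum>w\<in>A. sgn (int (g w) - int (f w)))"
proof -
  have card: "int (card {w \<in> A. P w}) = (\<Sum>w\<in>A. if P w then 1 else 0)" for P
    using sum.inter_filter[OF assms, of "\<lambda>_. 1 :: int" P] by simp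
  show ?thesis
    unfolding card sum_subtractf[symmetric] by (rule sum.cong) (auto simp: sgn_if)
qed

lemma sum_lessThan_split3:
  fixes f :: "nat \<Rightarrow> 'a::comm_monoid_add"
  assumes "a + b \<le> n"
  shows "(\<Sum>i<n. f i) = (\<Sum>i<a. f i) + (\<Sum>i\<in>{a..<n - b}. f i) + (\<Sum>i<b. f (n - b + i))"
proof -
  have "(\<Sum>i<n. f i) = sum f {0..<a} + sum f {a..<n - b} + sum f {n - b..<n}"
    using assms by (simp add: lessThan_atLeast0 sum.atLeastLessThan_concat)
  also have "sum f {n - b..<n} = (\<Sum>i<b. f (n - b + i))"
    using sum.shift_bounds_nat_ivl[of f 0 "n - b" b] assms by (simp add: lessThan_atLeast0 add.commute)
  finally show ?thesis by (simp add: lessThan_atLeast0)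
qed

text \<open>
  imbalance_at i (n - i) is the contribution of u_i and v_i to |W_xy| - |W_yx|; the rotation
  moving u_(n-1) to u_0 shifts their index to i + 1.
\<close>

definition imbalance_at :: "nat \<Rightarrow> nat \<Rightarrow> int" where
  "imbalance_at L R =
     sgn (int (min (dist_uu (L + 1)) (dist_uu (R - 1))) - int (min (dist_uv L) (dist_uv R)))
   + sgn (int (min (dist_uv (L + 1)) (dist_uv (R - 1))) - int (min (dist_vv L) (dist_vv R)))"

definition imbalance :: "nat \<Rightarrow> int" where
  "imbalance n = (\<Sum>i<n. imbalance_at i (n - i))"

lemma card_Wset_diff_eq_imbalance:
  assumes "17 \<le> n"
  shows "int (card (Wset (GP_V n) (GP_E n 3) (True, 0) (False, n - 1)))
       - int (card (Wset (GP_V n) (GP_E n 3) (False, n - 1) (True, 0))) = imbalance n"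
proof -
  let ?dv = "from_v0.wrapped n" and ?du = "\<lambda>w. from_u0.wrapped n (GP_rot n w)"
  have "Wset (GP_V n) (GP_E n 3) (True, 0) (False, n - 1) = {w \<in> GP_V n. ?dv w < ?du w}"
    and "Wset (GP_V n) (GP_E n 3) (False, n - 1) (True, 0) = {w \<in> GP_V n. ?du w < ?dv w}"
    using from_v0.gdist_to_root[OF assms] gdist_to_u_last[OF assms] by (auto simp: Wset_def)
  then have "int (card (Wset (GP_V n) (GP_E n 3) (True, 0) (False, n - 1)))
       - int (card (Wset (GP_V n) (GP_E n 3) (False, n - 1) (True, 0)))
      = (\<Sum>w\<in>GP_V n. sgn (int (?du w) - int (?dv w)))"
    by (simp add: card_less_diff_eq_sum_sgn GP_V_def)
  also have "\<dots> = (\<Sum>b\<in>UNIV. \<Sum>i<n. sgn (int (?du (b, i)) - int (?dv (b, i))))"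
    by (simp add: GP_V_def atLeast0LessThan sum.cartesian_product)
  also have "\<dots> = (\<Sum>i<n. \<Sum>b\<in>UNIV. sgn (int (?du (b, i)) - int (?dv (b, i))))"
    by (rule sum.swap)
  also have "\<dots> = imbalance n"
    unfolding imbalance_def
  proof (rule sum.cong)
    fix i assume "i \<in> {..<n}"
    then show "(\<Sum>b\<in>UNIV. sgn (int (?du (b, i)) - int (?dv (b, i)))) = imbalance_at i (n - i)"
      using from_u0.wrapped_Suc_mod[of i n]
      by (simp add: UNIV_bool GP_rot_def from_v0.wrapped_def imbalance_at_def)
  qed simp
  finally show ?thesis .
qed

lemma imbalance_at_shift:
  assumes "3 \<le> L" and "4 \<le> R"
  shows "imbalance_at (L + 3) (R + 3) = imbalance_at L R"
proof -
  have L: "L + 3 + 1 = (L + 1) + 3" and R: "R + 3 - 1 = (R - 1) + 3"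
    and "3 \<le> L + 1" and "3 \<le> R - 1"
    using assms by simp_all
  have min_Suc: "min (a + 1) (b + 1) = min a b + 1" for a b :: nat
    by simp
  show ?thesis
    unfolding imbalance_at_def L R dist_add3 min_Suc
      dist_uu_add3[OF \<open>3 \<le> L + 1\<close>] dist_uu_add3[OF \<open>3 \<le> R - 1\<close>] by simp
qed

lemma imbalance_at_far_right:
  assumes "L \<le> 5" and "16 \<le> R" and "16 \<le> R'"
  shows "imbalance_at L R = imbalance_at L R'"
  using dist_far[of L R] dist_far[of "L + 1" "R - 1"] dist_far[of L R'] dist_far[of "L + 1" "R' - 1"] assms
  by (simp add: imbalance_at_def min_absorb1)

lemma imbalance_at_far_left:
  assumes "R \<le> 6" and "15 \<le> L" and "15 \<le> L'"
  shows "imbalance_at L R = imbalance_at L' R"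
  using dist_far[of R L] dist_far[of "R - 1" "L + 1"] dist_far[of R L'] dist_far[of "R - 1" "L' + 1"] assms
  by (simp add: imbalance_at_def min_absorb2)

lemma sum_imbalance_at_shift:
  "(\<Sum>i\<in>{6..<n}. imbalance_at i (n + 6 - i)) = (\<Sum>i\<in>{3..<n - 3}. imbalance_at i (n - i))"
proof (cases "6 \<le> n")
  case True
  then have "{6..<n} = {3 + 3..<(n - 3) + 3}" by simp
  then have "(\<Sum>i\<in>{6..<n}. imbalance_at i (n + 6 - i))
      = (\<Sum>i\<in>{3..<n - 3}. imbalance_at (i + 3) (n + 6 - (i + 3)))"
    by (simp only: sum.shift_bounds_nat_ivl)
  also have "\<dots> = (\<Sum>i\<in>{3..<n - 3}. imbalance_at i (n - i))"
  proof (rule sum.cong)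
    fix i assume "i \<in> {3..<n - 3}"
    then have R: "n + 6 - (i + 3) = (n - i) + 3" and "3 \<le> i" "4 \<le> n - i" by auto
    show "imbalance_at (i + 3) (n + 6 - (i + 3)) = imbalance_at i (n - i)"
      unfolding R using \<open>3 \<le> i\<close> \<open>4 \<le> n - i\<close> by (rule imbalance_at_shift)
  qed simp
  finally show ?thesis .
qed simp

text \<open>
  By imbalance_at_shift only the terms near i = 0 and i = n differ between n and n + 6; by
  imbalance_at_far_left/right they are those of n = 18.
\<close>

lemma imbalance_add6:
  assumes "18 \<le> n"
  shows "imbalance (n + 6) = imbalance n + 2"
proof -
  define f where "f i = imbalance_at i (n + 6 - i)" for i
  define g where "g i = imbalance_at i (n - i)" for i
  have split_f: "imbalance (n + 6) = (\<Sum>i<6. f i) + sum f {6..<n} + (\<Sum>i<6. f (n + i))"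
    using sum_lessThan_split3[of 6 6 "n + 6" f] assms by (simp add: imbalance_def f_def)
  have split_g: "imbalance n = (\<Sum>i<3. g i) + sum g {3..<n - 3} + (\<Sum>i<3. g (n - 3 + i))"
    using sum_lessThan_split3[of 3 3 n g] assms by (simp add: imbalance_def g_def)
  have middle: "sum f {6..<n} = sum g {3..<n - 3}"
    unfolding f_def g_def by (rule sum_imbalance_at_shift)
  have left_f: "(\<Sum>i<6. f i) = (\<Sum>i<6. imbalance_at i (24 - i))"
    unfolding f_def by (rule sum.cong, simp, rule imbalance_at_far_right) (use assms in auto)
  have right_f: "(\<Sum>i<6. f (n + i)) = (\<Sum>i<6. imbalance_at (18 + i) (6 - i))"
    unfolding f_def by (rule sum.cong, simp, simp, rule imbalance_at_far_left) (use assms in auto)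
  have left_g: "(\<Sum>i<3. g i) = (\<Sum>i<3. imbalance_at i (18 - i))"
    unfolding g_def by (rule sum.cong, simp, rule imbalance_at_far_right) (use assms in auto)
  have right_g: "(\<Sum>i<3. g (n - 3 + i)) = (\<Sum>i<3. imbalance_at (15 + i) (3 - i))"
  proof (rule sum.cong)
    fix i :: nat assume "i \<in> {..<3}"
    then have R: "n - (n - 3 + i) = 3 - i" using assms by auto
    show "g (n - 3 + i) = imbalance_at (15 + i) (3 - i)"
      unfolding g_def R by (rule imbalance_at_far_left) (use assms \<open>i \<in> {..<3}\<close> in auto)
  qed simp
  have boundary: "(\<Sum>i<6. imbalance_at i (24 - i)) + (\<Sum>i<6. imbalance_at (18 + i) (6 - i))
      = (\<Sum>i<3. imbalance_at i (18 - i)) + (\<Sum>i<3. imbalance_at (15 + i) (3 - i)) + 2"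
    by code_simp
  have cancel: "a + m + b = c + m + d + 2" if "a + b = c + d + 2" for a b c d m :: int
    using that by simp
  show ?thesis
    by (subst split_f, subst split_g, subst middle, subst left_f, subst right_f, subst left_g,
        subst right_g, rule cancel[OF boundary])
qed

lemma imbalance_pos: "17 \<le> n \<Longrightarrow> 0 < imbalance n"
proof (induction n rule: less_induct)
  case (less n)
  show ?case
  proof (cases "n < 24")
    case True
    have "list_all (\<lambda>n. 0 < imbalance n) [17..<24]"
      by code_simp
    moreover have "n \<in> set [17..<24]"
      unfolding set_upt using True less.prems by simp
    ultimately show ?thesis
      by (simp only: list_all_iff)
  next
    case False
    then have "imbalance n = imbalance (n - 6) + 2"
      using imbalance_add6[of "n - 6"] by simp
    moreover have "0 < imbalance (n - 6)"
      using less.IH[of "n - 6"] False by simp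
    ultimately show ?thesis by simp
  qed
qed

theorem proposition2p2:
  fixes n :: nat
  assumes "n > 16"
  shows "\<not> distance_balanced 2 (GP_V n) (GP_E n 3)"
proof
  assume "distance_balanced 2 (GP_V n) (GP_E n 3)"
  moreover have n: "17 \<le> n"
    using assms by simp
  moreover have "(True, 0) \<in> GP_V n" "(False, n - 1) \<in> GP_V n"
    using assms by (simp_all add: GP_V_def)
  ultimately have "card (Wset (GP_V n) (GP_E n 3) (True, 0) (False, n - 1))
      = card (Wset (GP_V n) (GP_E n 3) (False, n - 1) (True, 0))"
    using gdist_v0_u_last unfolding distance_balanced_def by blast
  then have "imbalance n = 0"
    using card_Wset_diff_eq_imbalance[OF n] by simp
  with imbalance_pos[OF n] show False
    by simp
qed

end
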